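(* Let $\gamma$ be a Gutkin curve with contact angle $\alpha$ on the unit sphere $\mathbb{S}^2$, with geodesic curvature $\kappa$, arc-length coordinate $s$ and chord parameterizations $x(t),y(t)$, where the parameter $t$ is chosen so that $\frac{dx}{dt}=\frac{a}{\sqrt{\kappa^2(x)+\sin^2\alpha}}$ and $\frac{dy}{dt}=\frac{a}{\sqrt{\kappa^2(y)+\sin^2\alpha}}$ for a constant $a>0$. Define the function $f$ on $\gamma$, with values in $(0,\pi)$, by $\cot f=\kappa/\sin\alpha$, and set $f_1(t)=f(x(t))$, $f_2(t)=f(y(t))$. Then $$f_1'(t)+f_2'(t)=a\cot\alpha\,\big(\sin f_2(t)-\sin f_1(t)\big).$$
   Context: A smooth convex oriented closed curve $C$ on $\mathbb{S}^2$ is a Gutkin curve with contact angle $\alpha\in(0,\pi]$ if there are parameterizations $x(t),y(t)$ of $C$ with $x'(t),y'(t)>0$, $x(t)\ne y(t)$, such that for every $t$ the geodesic chord from $x(t)$ to $y(t)$ makes angle $\alpha$ with $C$ at both ends: at $x(t)$ the angle between the positively oriented tangent and the chord direction towards $y(t)$, and at $y(t)$ the angle between the chord direction (from $x(t)$ towards $y(t)$) and the positively oriented tangent. With this convention, if $L(x,y)$ is the length of the chord, then $\partial L/\partial x=-\cos\alpha$ and $\partial L/\partial y=\cos\alpha$ along the family. *)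

theory Defs
  imports "HOL-Analysis.Analysis" "HOL-Analysis.Cross3"
begin

definition smooth_curve :: "(real \<Rightarrow> real^3) \<Rightarrow> bool" where
  "smooth_curve \<gamma> \<longleftrightarrow> (\<exists>D :: nat \<Rightarrow> real \<Rightarrow> real^3. D 0 = \<gamma> \<and>
      (\<forall>k s. (D k has_vector_derivative D (Suc k) s) (at s)))"

definition tangent :: "(real \<Rightarrow> real^3) \<Rightarrow> real \<Rightarrow> real^3" where
  "tangent \<gamma> s = vector_derivative \<gamma> (at s)"

definition geod_curv :: "(real \<Rightarrow> real^3) \<Rightarrow> real \<Rightarrow> real" where
  "geod_curv \<gamma> s = inner (cross3 (\<gamma> s) (tangent \<gamma> s)) (vector_derivative (tangent \<gamma>) (at s))"

text \<open>Smooth, simple, closed, unit speed curve on S^2 of length L, positively oriented and convex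
  (geodesic curvature nonnegative w.r.t. the left normal).\<close>
definition convex_sphere_curve :: "(real \<Rightarrow> real^3) \<Rightarrow> real \<Rightarrow> bool" where
  "convex_sphere_curve \<gamma> L \<longleftrightarrow> L > 0 \<and> smooth_curve \<gamma> \<and> (\<forall>s. \<gamma> (s + L) = \<gamma> s)
     \<and> inj_on \<gamma> {0..<L} \<and> (\<forall>s. norm (\<gamma> s) = 1) \<and> (\<forall>s. norm (tangent \<gamma> s) = 1)
     \<and> (\<forall>s. geod_curv \<gamma> s \<ge> 0)"

text \<open>Unit tangent vector at p of the (minimizing) geodesic from p to q on S^2 (p, q not antipodal).\<close>
definition geod_dir :: "real^3 \<Rightarrow> real^3 \<Rightarrow> real^3" where
  "geod_dir p q = (1 / norm (q - inner p q *\<^sub>R p)) *\<^sub>R (q - inner p q *\<^sub>R p)"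

definition chord_angle :: "(real \<Rightarrow> real^3) \<Rightarrow> real \<Rightarrow> real \<Rightarrow> real \<Rightarrow> bool" where
  "chord_angle \<gamma> \<alpha> x y \<longleftrightarrow> \<gamma> x \<noteq> \<gamma> y \<and> \<gamma> x \<noteq> - \<gamma> y
     \<and> inner (tangent \<gamma> x) (geod_dir (\<gamma> x) (\<gamma> y)) = cos \<alpha>
     \<and> inner (- geod_dir (\<gamma> y) (\<gamma> x)) (tangent \<gamma> y) = cos \<alpha>"

end

(* Let l be the spherical length of the chord from gamma(X) to gamma(Y). Its first variation is
   l' = cos alpha (Y' - X'), and the choice of parameter gives X' sin alpha = a sin f(X) and
   Y' sin alpha = a sin f(Y); so the theorem is the derivative of the identity f(X) + f(Y) = l.

   To prove that identity, expand gamma(Y) in the frame (gamma, gamma', gamma x gamma') at X: the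
   components are cos l, cos alpha sin l and a normal component hX with hX^2 = sin^2 alpha sin^2 l;
   symmetrically at Y. Differentiating the two contact conditions and hX^2 along the family and
   eliminating the products of tangents and normals gives
   cos f(Y) = cos f(X) cos l + sgn hX sin f(X) sin l, and its mirror image with X and Y swapped.
   Where gamma(X) has minimal curvature, convexity rules out sgn hX = -1; as hX never vanishes it
   is positive everywhere, and likewise hY. Then f(Y) = l - f(X). *)

theory Submission
  imports Defs
begin

unbundle cross3_syntax
unbundle no set_product_syntax

lemma cross_cross_right:
  fixes a b c :: "real^3"
  shows "a \<times> (b \<times> c) = (a \<bullet> c) *\<^sub>R b - (a \<bullet> b) *\<^sub>R c"
  unfolding vec_eq_iff forall_3 by (simp add: cross3_simps)

lemma inner_cross_rotate:
  fixes a b c :: "real^3"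
  shows "(a \<times> b) \<bullet> c = b \<bullet> (c \<times> a)"
  by (simp add: cross3_simps)

lemma orthonormal_frame_expansion:
  fixes u v z :: "real^3"
  assumes "norm u = 1" "norm v = 1" "u \<bullet> v = 0"
  shows "z = (z \<bullet> u) *\<^sub>R u + (z \<bullet> v) *\<^sub>R v + (z \<bullet> (u \<times> v)) *\<^sub>R (u \<times> v)"
proof -
  define r where "r = z - (z \<bullet> u) *\<^sub>R u - (z \<bullet> v) *\<^sub>R v"
  have uu: "u \<bullet> u = 1" and vv: "v \<bullet> v = 1" using assms(1,2) by (simp_all add: norm_eq_1)
  have "r \<bullet> u = 0" "r \<bullet> v = 0"
    unfolding r_def using uu vv assms(3) by (simp_all add: inner_diff_left inner_diff_right inner_commute)
  then have "r \<times> (u \<times> v) = 0" by (simp add: cross_cross_right inner_commute)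
  moreover have "(u \<times> v) \<bullet> (u \<times> v) = 1"
    using norm_cross_dot[of u v] assms by (simp add: power2_norm_eq_inner[symmetric])
  ultimately have "r = ((u \<times> v) \<bullet> r) *\<^sub>R (u \<times> v)"
    using cross_cross_right[of "u \<times> v" r "u \<times> v"] by simp
  moreover have "(u \<times> v) \<bullet> r = z \<bullet> (u \<times> v)"
    unfolding r_def by (simp add: inner_diff_right dot_cross_self inner_commute)
  ultimately show ?thesis unfolding r_def by (simp add: algebra_simps)
qed

lemma inner_self_orthonormal_frame:
  fixes u v z :: "real^3"
  assumes "norm u = 1" "norm v = 1" "u \<bullet> v = 0"
  shows "z \<bullet> z = (z \<bullet> u)\<^sup>2 + (z \<bullet> v)\<^sup>2 + (z \<bullet> (u \<times> v))\<^sup>2"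
proof -
  have "z \<bullet> z = z \<bullet> ((z \<bullet> u) *\<^sub>R u + (z \<bullet> v) *\<^sub>R v + (z \<bullet> (u \<times> v)) *\<^sub>R (u \<times> v))"
    using orthonormal_frame_expansion[OF assms] by simp
  then show ?thesis by (simp add: inner_add_right power2_eq_square)
qed

definition sph_dist :: "real^3 \<Rightarrow> real^3 \<Rightarrow> real" where
  "sph_dist p q = arccos (p \<bullet> q)"

lemma sph_dist_commute: "sph_dist p q = sph_dist q p"
  by (simp add: sph_dist_def inner_commute)

lemma inner_unit_bounds:
  fixes p q :: "'a::real_inner"
  assumes "norm p = 1" "norm q = 1"
  shows "\<bar>p \<bullet> q\<bar> \<le> 1"
  using Cauchy_Schwarz_ineq2[of p q] assms by simp

lemma inner_unit_strict_bounds: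
  fixes p q :: "'a::real_inner"
  assumes "norm p = 1" "norm q = 1" "p \<noteq> q" "p \<noteq> - q"
  shows "\<bar>p \<bullet> q\<bar> < 1"
proof -
  have pp: "p \<bullet> p = 1" and qq: "q \<bullet> q = 1" using assms(1,2) by (simp_all add: norm_eq_1)
  have "(p - q) \<bullet> (p - q) \<noteq> 0" "(p + q) \<bullet> (p + q) \<noteq> 0"
    using assms(3,4) by (auto simp: add_eq_0_iff)
  then have "p \<bullet> q \<noteq> 1" "p \<bullet> q \<noteq> -1"
    using pp qq by (auto simp: inner_diff_left inner_diff_right inner_add_left inner_add_right inner_commute)
  with inner_unit_bounds[OF assms(1,2)] show ?thesis by auto
qed

lemma cos_sph_dist:
  assumes "norm p = 1" "norm q = 1"
  shows "cos (sph_dist p q) = p \<bullet> q"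
  unfolding sph_dist_def using inner_unit_bounds[OF assms] by (simp add: abs_le_iff)

lemma sph_dist_bounds:
  assumes "norm p = 1" "norm q = 1" "p \<noteq> q" "p \<noteq> - q"
  shows "0 < sph_dist p q \<and> sph_dist p q < pi"
  unfolding sph_dist_def using inner_unit_strict_bounds[OF assms] arccos_lt_bounded
  by (simp add: abs_less_iff)

lemma norm_reject_eq_sin_sph_dist:
  fixes p q :: "real^3"
  assumes "norm p = 1" "norm q = 1"
  shows "norm (q - (p \<bullet> q) *\<^sub>R p) = sin (sph_dist p q)"
proof -
  have "(norm (q - (p \<bullet> q) *\<^sub>R p))\<^sup>2 = 1 - (p \<bullet> q)\<^sup>2"
    using assms unfolding power2_norm_eq_inner
    by (simp add: norm_eq_1 inner_diff_left inner_diff_right inner_commute power2_eq_square)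
  then show ?thesis
    unfolding sph_dist_def sin_arccos_abs[OF inner_unit_bounds[OF assms]]
    by (metis norm_ge_zero real_sqrt_unique)
qed

lemma has_real_derivative_inner:
  fixes f g :: "real \<Rightarrow> 'a::real_inner"
  assumes "(f has_vector_derivative f') (at x)" "(g has_vector_derivative g') (at x)"
  shows "((\<lambda>x. f x \<bullet> g x) has_real_derivative f' \<bullet> g x + f x \<bullet> g') (at x)"
  using bounded_bilinear.has_vector_derivative[OF bounded_bilinear_inner assms]
  by (simp add: has_real_derivative_iff_has_vector_derivative add.commute)

lemma has_vector_derivative_cross:
  fixes f g :: "real \<Rightarrow> real^3"
  assumes "(f has_vector_derivative f') (at x)" "(g has_vector_derivative g') (at x)"
  shows "((\<lambda>x. f x \<times> g x) has_vector_derivative f' \<times> g x + f x \<times> g') (at x)"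
proof -
  have "bounded_bilinear (cross3 :: real^3 \<Rightarrow> real^3 \<Rightarrow> real^3)"
    using bilinear_cross bilinear_conv_bounded_bilinear by blast
  from bounded_bilinear.has_vector_derivative[OF this assms] show ?thesis
    by (simp add: add.commute)
qed

lemma has_vector_derivative_compose_real:
  assumes "(X has_real_derivative v) (at t)" "(F has_vector_derivative F') (at (X t))"
  shows "((\<lambda>t. F (X t)) has_vector_derivative v *\<^sub>R F') (at t)"
  using vector_diff_chain_at[of X v t F F'] assms
  by (simp add: has_real_derivative_iff_has_vector_derivative o_def)

lemma DERIV_unique_ext:
  assumes "\<And>x. F x = G x" "(F has_real_derivative d) (at t)" "(G has_real_derivative e) (at t)"
  shows "d = e"
proof -
  have "F = G" using assms(1) by blast
  with assms(2,3) show ?thesis using DERIV_unique by blast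
qed

lemma continuous_nonvanishing_pos:
  fixes g :: "real \<Rightarrow> real"
  assumes "continuous_on UNIV g" "\<And>x. g x \<noteq> 0" "g a > 0"
  shows "g b > 0"
proof (rule ccontr)
  assume "\<not> g b > 0"
  then have "g b \<le> 0" by simp
  moreover have "continuous_on {u..v} g" for u v
    using assms(1) continuous_on_subset by blast
  ultimately obtain x where "g x = 0"
    using IVT'[of g b 0 a] IVT2'[of g b 0 a] assms(3) by (cases "b \<le> a") auto
  with assms(2) show False by blast
qed

lemma surj_if_deriv_bounded_below:
  fixes F F' :: "real \<Rightarrow> real"
  assumes deriv: "\<And>\<tau>. (F has_real_derivative F' \<tau>) (at \<tau>)" and "\<And>\<tau>. F' \<tau> \<ge> m" "m > 0"
  shows "surj F"
proof -
  have cont: "continuous_on {u..v} F" for u v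
    using deriv DERIV_isCont by (blast intro: continuous_at_imp_continuous_on)
  have grow: "F u + m * (v - u) \<le> F v" if "u \<le> v" for u v
  proof -
    have "F u - m * u \<le> F v - m * v"
      using DERIV_nonneg_imp_nondecreasing[OF that, of "\<lambda>\<tau>. F \<tau> - m * \<tau>"] assms(2)
      by (force intro!: derivative_eq_intros deriv)
    then show ?thesis by (simp add: algebra_simps)
  qed
  have "\<exists>\<tau>. F \<tau> = z" for z
  proof -
    define T where "T = (z - F 0) / m"
    show ?thesis
    proof (cases "F 0 \<le> z")
      case True
      then have "0 \<le> T" "z \<le> F T" using grow[of 0 T] \<open>m > 0\<close> by (simp_all add: T_def)
      then show ?thesis using IVT'[of F 0 z T] True cont by auto
    next
      case False
      then have "T \<le> 0" "F T \<le> z" using grow[of T 0] \<open>m > 0\<close>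
        by (simp_all add: T_def divide_nonpos_pos)
      then show ?thesis using IVT'[of F T z 0] False cont by auto
    qed
  qed
  then show ?thesis by (metis surjI)
qed

lemma periodic_int_multiple:
  fixes g :: "real \<Rightarrow> 'a" and P :: real
  assumes "\<And>s. g (s + P) = g s"
  shows "g (s + of_int n * P) = g s"
proof -
  have nat: "g (s + real m * P) = g s" for s m
  proof (induction m)
    case (Suc m)
    have "g (s + real (Suc m) * P) = g ((s + real m * P) + P)" by (simp add: algebra_simps)
    with Suc show ?case by (simp only: assms)
  qed simp
  show ?thesis
  proof (cases "n \<ge> 0")
    case True
    then show ?thesis using nat[of s "nat n"] by simp
  next
    case False
    then show ?thesis using nat[of "s + of_int n * P" "nat (- n)"] by simp
  qed
qed

lemma periodic_range:
  fixes g :: "real \<Rightarrow> 'a" and P :: real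
  assumes "\<And>s. g (s + P) = g s" "P > 0"
  shows "range g = g ` {0..P}"
proof -
  have "g s \<in> g ` {0..P}" for s
  proof
    let ?n = "\<lfloor>s / P\<rfloor>"
    show "g s = g (s - of_int ?n * P)"
      using periodic_int_multiple[of g P, OF assms(1), of "s - of_int ?n * P" ?n] by simp
    show "s - of_int ?n * P \<in> {0..P}"
      using floor_divide_lower[OF assms(2), of s] floor_divide_upper[OF assms(2), of s]
      by (simp add: algebra_simps)
  qed
  then show ?thesis by auto
qed

lemma continuous_periodic_attains_inf_sup:
  fixes g :: "real \<Rightarrow> real"
  assumes "continuous_on UNIV g" "\<And>s. g (s + P) = g s" "P > 0"
  shows "\<exists>s0. \<forall>s. g s0 \<le> g s" and "\<exists>s1. \<forall>s. g s \<le> g s1"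
proof -
  have cont: "continuous_on {0..P} g" using assms(1) continuous_on_subset by blast
  have range: "g s \<in> g ` {0..P}" for s using periodic_range[of g P, OF assms(2,3)] by auto
  obtain s0 where "\<forall>y\<in>{0..P}. g s0 \<le> g y"
    using continuous_attains_inf[OF compact_Icc _ cont] assms(3) by fastforce
  then have "g s0 \<le> g s" for s using range[of s] by force
  then show "\<exists>s0. \<forall>s. g s0 \<le> g s" by blast
  obtain s1 where "\<forall>y\<in>{0..P}. g y \<le> g s1"
    using continuous_attains_sup[OF compact_Icc _ cont] assms(3) by fastforce
  then have "g s \<le> g s1" for s using range[of s] by force
  then show "\<exists>s1. \<forall>s. g s \<le> g s1" by blast
qed

lemma sin_cos_eq_of_cot:
  assumes "0 < \<theta>" "\<theta> < pi" "s > 0" "cot \<theta> = k / s"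
  shows "sin \<theta> = s / sqrt (k\<^sup>2 + s\<^sup>2)" and "cos \<theta> = k / sqrt (k\<^sup>2 + s\<^sup>2)"
proof -
  have sin_pos: "sin \<theta> > 0" using assms(1,2) by (rule sin_gt_zero)
  have cos_eq: "cos \<theta> = k * sin \<theta> / s"
    using assms(3,4) sin_pos unfolding cot_def by (simp add: field_simps)
  have "(sin \<theta> * sqrt (k\<^sup>2 + s\<^sup>2))\<^sup>2 = s\<^sup>2"
    using sin_cos_squared_add[of \<theta>] assms(3) unfolding cos_eq
    by (simp add: power_mult_distrib power_divide field_simps)
  then have "sin \<theta> * sqrt (k\<^sup>2 + s\<^sup>2) = s"
    using sin_pos assms(3) by (simp add: power2_eq_iff_nonneg)
  then show sin_eq: "sin \<theta> = s / sqrt (k\<^sup>2 + s\<^sup>2)"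
    using assms(3) by (simp add: field_simps add_nonneg_pos)
  show "cos \<theta> = k / sqrt (k\<^sup>2 + s\<^sup>2)"
    unfolding cos_eq sin_eq using assms(3) by simp
qed

lemma eq_pi_half_minus_arctan_cot:
  assumes "0 < \<theta>" "\<theta> < pi"
  shows "\<theta> = pi / 2 - arctan (cot \<theta>)"
  using arctan_tan[of "pi / 2 - \<theta>"] assms by (simp add: tan_cot')

section \<open>Unit-speed curves on the sphere\<close>

declare One_nat_def [simp del] \<comment> \<open>keeps \<open>D 1\<close> from being rewritten to \<open>D (Suc 0)\<close>\<close>

locale unit_sphere_curve =
  fixes D :: "nat \<Rightarrow> real \<Rightarrow> real^3"
  assumes has_vector_derivative_D: "\<And>k s. (D k has_vector_derivative D (Suc k) s) (at s)"
    and norm_D0: "\<And>s. norm (D 0 s) = 1"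
    and norm_D1: "\<And>s. norm (D 1 s) = 1"
begin

definition normal :: "real \<Rightarrow> real^3" where
  "normal s = D 0 s \<times> D 1 s"

abbreviation curv :: "real \<Rightarrow> real" where
  "curv \<equiv> geod_curv (D 0)"

lemma has_vector_derivative_D0: "(D 0 has_vector_derivative D 1 s) (at s)"
  and has_vector_derivative_D1: "(D 1 has_vector_derivative D 2 s) (at s)"
  using has_vector_derivative_D[of 0 s] has_vector_derivative_D[of 1 s]
  by (simp_all add: One_nat_def numeral_2_eq_2)

lemma tangent_eq: "tangent (D 0) = D 1"
  unfolding tangent_def using has_vector_derivative_D0 by (simp add: vector_derivative_at fun_eq_iff)

lemma curv_eq: "curv s = normal s \<bullet> D 2 s"
  unfolding geod_curv_def tangent_eq normal_def
  by (simp add: vector_derivative_at[OF has_vector_derivative_D1])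

lemma inner_D0_D0: "D 0 s \<bullet> D 0 s = 1" and inner_D1_D1: "D 1 s \<bullet> D 1 s = 1"
  using norm_D0 norm_D1 by (simp_all add: norm_eq_1)

lemma inner_D0_D1: "D 0 s \<bullet> D 1 s = 0"
proof -
  have "((\<lambda>s. D 0 s \<bullet> D 0 s) has_real_derivative 2 * (D 0 s \<bullet> D 1 s)) (at s)"
    using has_real_derivative_inner[OF has_vector_derivative_D0 has_vector_derivative_D0]
    by (simp add: inner_commute)
  from DERIV_unique_ext[OF _ this DERIV_const] show ?thesis by (simp add: inner_D0_D0)
qed

lemma inner_D1_D0: "D 1 s \<bullet> D 0 s = 0"
  using inner_D0_D1 by (simp add: inner_commute)

lemma inner_D1_D2: "D 1 s \<bullet> D 2 s = 0"
proof -
  have "((\<lambda>s. D 1 s \<bullet> D 1 s) has_real_derivative 2 * (D 1 s \<bullet> D 2 s)) (at s)"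
    using has_real_derivative_inner[OF has_vector_derivative_D1 has_vector_derivative_D1]
    by (simp add: inner_commute)
  from DERIV_unique_ext[OF _ this DERIV_const] show ?thesis by (simp add: inner_D1_D1)
qed

lemma inner_D0_D2: "D 0 s \<bullet> D 2 s = -1"
proof -
  have "((\<lambda>s. D 0 s \<bullet> D 1 s) has_real_derivative D 1 s \<bullet> D 1 s + D 0 s \<bullet> D 2 s) (at s)"
    by (rule has_real_derivative_inner[OF has_vector_derivative_D0 has_vector_derivative_D1])
  from DERIV_unique_ext[OF _ this DERIV_const] show ?thesis by (simp add: inner_D0_D1 inner_D1_D1)
qed

lemma D2_eq: "D 2 s = curv s *\<^sub>R normal s - D 0 s"
  using orthonormal_frame_expansion[OF norm_D0[of s] norm_D1[of s] inner_D0_D1[of s], of "D 2 s"]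
  unfolding curv_eq normal_def
  by (simp add: inner_commute inner_D0_D2 inner_D1_D2)

lemma has_vector_derivative_normal: "(normal has_vector_derivative - curv s *\<^sub>R D 1 s) (at s)"
proof -
  have "(normal has_vector_derivative D 1 s \<times> D 1 s + D 0 s \<times> D 2 s) (at s)"
    unfolding normal_def[abs_def]
    by (rule has_vector_derivative_cross[OF has_vector_derivative_D0 has_vector_derivative_D1])
  also have "D 1 s \<times> D 1 s + D 0 s \<times> D 2 s = - curv s *\<^sub>R D 1 s"
    unfolding D2_eq normal_def
    by (simp add: Cross3.right_diff_distrib cross_mult_right cross_cross_right inner_D0_D0 inner_D0_D1)
  finally show ?thesis .
qed

lemma has_real_derivative_curv: "(curv has_real_derivative normal s \<bullet> D 3 s) (at s)"
proof -
  have "((\<lambda>s. normal s \<bullet> D 2 s) has_real_derivative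
      - curv s *\<^sub>R D 1 s \<bullet> D 2 s + normal s \<bullet> D 3 s) (at s)"
    using has_real_derivative_inner[OF has_vector_derivative_normal has_vector_derivative_D[of 2]]
    by simp
  then show ?thesis unfolding curv_eq by (simp add: inner_D1_D2)
qed

lemma isCont_D: "isCont (D k) s"
  using has_vector_derivative_D has_vector_derivative_continuous by blast

lemma isCont_normal: "isCont normal s"
  unfolding normal_def[abs_def] by (intro continuous_cross isCont_D)

lemma continuous_curv: "continuous_on UNIV curv"
  using has_real_derivative_curv DERIV_isCont continuous_at_imp_continuous_on by blast

lemma periodic_D:
  assumes "\<And>s. D 0 (s + P) = D 0 s"
  shows "D k (s + P) = D k s"
proof (induction k arbitrary: s)
  case (Suc k)
  have "((\<lambda>s. D k (s + P)) has_vector_derivative 1 *\<^sub>R D (Suc k) (s + P)) (at s)"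
    by (rule has_vector_derivative_compose_real[OF _ has_vector_derivative_D])
      (auto intro!: derivative_eq_intros)
  moreover have "(\<lambda>s. D k (s + P)) = D k" using Suc by auto
  ultimately have "(D k has_vector_derivative D (Suc k) (s + P)) (at s)" by simp
  then show ?case using has_vector_derivative_D[of k s] vector_derivative_unique_at by blast
qed (rule assms)

lemma periodic_curv:
  assumes "\<And>s. D 0 (s + P) = D 0 s"
  shows "curv (s + P) = curv s"
  unfolding curv_eq normal_def periodic_D[OF assms] ..

lemma chord_sph_dist_bounds:
  assumes "chord_angle (D 0) \<alpha> x y"
  shows "0 < sph_dist (D 0 x) (D 0 y) \<and> sph_dist (D 0 x) (D 0 y) < pi"
  using assms sph_dist_bounds[OF norm_D0 norm_D0] unfolding chord_angle_def by blast

lemma chord_tangent_inner: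
  assumes "chord_angle (D 0) \<alpha> x y"
  defines "d \<equiv> sph_dist (D 0 x) (D 0 y)"
  shows "D 1 x \<bullet> D 0 y = cos \<alpha> * sin d" and "D 0 x \<bullet> D 1 y = - cos \<alpha> * sin d"
proof -
  have "sin d > 0" using chord_sph_dist_bounds[OF assms(1)] sin_gt_zero unfolding d_def by blast
  have "geod_dir (D 0 x) (D 0 y) = (1 / sin d) *\<^sub>R (D 0 y - (D 0 x \<bullet> D 0 y) *\<^sub>R D 0 x)"
    "geod_dir (D 0 y) (D 0 x) = (1 / sin d) *\<^sub>R (D 0 x - (D 0 y \<bullet> D 0 x) *\<^sub>R D 0 y)"
    unfolding geod_dir_def d_def norm_reject_eq_sin_sph_dist[OF norm_D0 norm_D0]
    by (simp_all add: sph_dist_commute)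
  moreover have "D 1 x \<bullet> geod_dir (D 0 x) (D 0 y) = cos \<alpha>"
    "- geod_dir (D 0 y) (D 0 x) \<bullet> D 1 y = cos \<alpha>"
    using assms(1) unfolding chord_angle_def tangent_eq by auto
  ultimately have "cos \<alpha> = D 1 x \<bullet> D 0 y / sin d" "cos \<alpha> = - (D 0 x \<bullet> D 1 y) / sin d"
    by (simp_all add: inner_diff_left inner_diff_right inner_D0_D1 inner_D1_D0 inner_commute)
  with \<open>sin d > 0\<close> show "D 1 x \<bullet> D 0 y = cos \<alpha> * sin d" "D 0 x \<bullet> D 1 y = - cos \<alpha> * sin d"
    by (simp_all add: field_simps)
qed

lemma chord_normal_inner_sq:
  assumes "chord_angle (D 0) \<alpha> x y"
  defines "d \<equiv> sph_dist (D 0 x) (D 0 y)"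
  shows "(normal x \<bullet> D 0 y)\<^sup>2 = (sin \<alpha> * sin d)\<^sup>2" and "(normal y \<bullet> D 0 x)\<^sup>2 = (sin \<alpha> * sin d)\<^sup>2"
proof -
  have cos_d: "cos d = D 0 x \<bullet> D 0 y" unfolding d_def by (rule cos_sph_dist[OF norm_D0 norm_D0])
  have "1 = (cos d)\<^sup>2 + (cos \<alpha> * sin d)\<^sup>2 + (normal x \<bullet> D 0 y)\<^sup>2"
    using inner_self_orthonormal_frame[OF norm_D0[of x] norm_D1[of x] inner_D0_D1[of x], of "D 0 y"]
    unfolding cos_d chord_tangent_inner(1)[OF assms(1), folded d_def, symmetric] normal_def
    by (simp add: inner_D0_D0 inner_commute)
  then show "(normal x \<bullet> D 0 y)\<^sup>2 = (sin \<alpha> * sin d)\<^sup>2"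
    using sin_cos_squared_add[of d] sin_cos_squared_add[of \<alpha>] by algebra
  have "1 = (cos d)\<^sup>2 + (cos \<alpha> * sin d)\<^sup>2 + (normal y \<bullet> D 0 x)\<^sup>2"
    using inner_self_orthonormal_frame[OF norm_D0[of y] norm_D1[of y] inner_D0_D1[of y], of "D 0 x"]
    unfolding cos_d chord_tangent_inner(2)[OF assms(1), folded d_def] normal_def
    by (simp add: inner_D0_D0 inner_commute power_mult_distrib)
  then show "(normal y \<bullet> D 0 x)\<^sup>2 = (sin \<alpha> * sin d)\<^sup>2"
    using sin_cos_squared_add[of d] sin_cos_squared_add[of \<alpha>] by algebra
qed

lemma chord_normal_cross_relation:
  assumes "chord_angle (D 0) \<alpha> x y"
  defines "d \<equiv> sph_dist (D 0 x) (D 0 y)"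
  shows "normal y \<bullet> D 0 x
    = cos \<alpha> * sin d * (normal x \<bullet> D 1 y) - (normal x \<bullet> D 0 y) * (D 1 x \<bullet> D 1 y)"
proof -
  let ?p = "D 0 x" and ?q = "D 0 y" and ?h = "normal x \<bullet> D 0 y"
  have "?q = (?p \<bullet> ?q) *\<^sub>R ?p + (cos \<alpha> * sin d) *\<^sub>R D 1 x + ?h *\<^sub>R normal x"
    using orthonormal_frame_expansion[OF norm_D0[of x] norm_D1[of x] inner_D0_D1[of x], of ?q]
    unfolding chord_tangent_inner(1)[OF assms(1), folded d_def, symmetric] normal_def
    by (simp add: inner_commute)
  then have "?p \<times> ?q = ?p \<times> ((?p \<bullet> ?q) *\<^sub>R ?p + (cos \<alpha> * sin d) *\<^sub>R D 1 x + ?h *\<^sub>R normal x)"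
    by (rule arg_cong)
  also have "\<dots> = (cos \<alpha> * sin d) *\<^sub>R (?p \<times> D 1 x) + ?h *\<^sub>R (?p \<times> normal x)"
    by (simp add: cross_add_right cross_mult_right)
  also have "?p \<times> normal x = - D 1 x"
    unfolding normal_def by (simp add: cross_cross_right inner_D0_D0 inner_D0_D1)
  finally have "?p \<times> ?q = (cos \<alpha> * sin d) *\<^sub>R normal x - ?h *\<^sub>R D 1 x"
    by (simp add: normal_def)
  moreover have "normal y \<bullet> ?p = D 1 y \<bullet> (?p \<times> ?q)"
    unfolding normal_def by (rule inner_cross_rotate)
  ultimately show ?thesis by (simp add: inner_diff_right inner_commute)
qed

end

section \<open>Chords meeting the curve at a constant angle\<close>

locale chord_family = unit_sphere_curve +
  fixes \<alpha> :: real and X Y vx vy :: "real \<Rightarrow> real"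
  assumes chord: "\<And>\<tau>. chord_angle (D 0) \<alpha> (X \<tau>) (Y \<tau>)"
    and has_real_derivative_X: "\<And>\<tau>. (X has_real_derivative vx \<tau>) (at \<tau>)"
    and has_real_derivative_Y: "\<And>\<tau>. (Y has_real_derivative vy \<tau>) (at \<tau>)"
begin

definition chord_len :: "real \<Rightarrow> real" where
  "chord_len \<tau> = sph_dist (D 0 (X \<tau>)) (D 0 (Y \<tau>))"

definition hX :: "real \<Rightarrow> real" where
  "hX \<tau> = normal (X \<tau>) \<bullet> D 0 (Y \<tau>)"

definition hY :: "real \<Rightarrow> real" where
  "hY \<tau> = normal (Y \<tau>) \<bullet> D 0 (X \<tau>)"

lemma chord_len_bounds: "0 < chord_len \<tau>" "chord_len \<tau> < pi"
  using chord_sph_dist_bounds[OF chord] unfolding chord_len_def by auto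

lemma sin_chord_len_pos: "sin (chord_len \<tau>) > 0"
  using chord_len_bounds by (simp add: sin_gt_zero)

lemma cos_chord_len: "cos (chord_len \<tau>) = D 0 (X \<tau>) \<bullet> D 0 (Y \<tau>)"
  unfolding chord_len_def by (rule cos_sph_dist[OF norm_D0 norm_D0])

lemma tangent_X_inner: "D 1 (X \<tau>) \<bullet> D 0 (Y \<tau>) = cos \<alpha> * sin (chord_len \<tau>)"
  and tangent_Y_inner: "D 0 (X \<tau>) \<bullet> D 1 (Y \<tau>) = - cos \<alpha> * sin (chord_len \<tau>)"
  using chord_tangent_inner[OF chord] unfolding chord_len_def by auto

lemma hX_sq: "(hX \<tau>)\<^sup>2 = (sin \<alpha> * sin (chord_len \<tau>))\<^sup>2"
  and hY_sq: "(hY \<tau>)\<^sup>2 = (sin \<alpha> * sin (chord_len \<tau>))\<^sup>2"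
  using chord_normal_inner_sq[OF chord] unfolding chord_len_def hX_def hY_def by auto

lemma hY_eq:
  "hY \<tau> = cos \<alpha> * sin (chord_len \<tau>) * (normal (X \<tau>) \<bullet> D 1 (Y \<tau>)) - hX \<tau> * (D 1 (X \<tau>) \<bullet> D 1 (Y \<tau>))"
  using chord_normal_cross_relation[OF chord] unfolding chord_len_def hX_def hY_def by auto

lemma has_vector_derivative_D_X: "((\<lambda>\<tau>. D k (X \<tau>)) has_vector_derivative vx \<tau> *\<^sub>R D (Suc k) (X \<tau>)) (at \<tau>)"
  and has_vector_derivative_D_Y: "((\<lambda>\<tau>. D k (Y \<tau>)) has_vector_derivative vy \<tau> *\<^sub>R D (Suc k) (Y \<tau>)) (at \<tau>)"
  by (rule has_vector_derivative_compose_real[OF has_real_derivative_X has_vector_derivative_D]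
      has_vector_derivative_compose_real[OF has_real_derivative_Y has_vector_derivative_D])+

lemmas has_vector_derivative_D0_X = has_vector_derivative_D_X[of 0, folded One_nat_def]
lemmas has_vector_derivative_D1_X = has_vector_derivative_D_X[of 1, unfolded Suc_1]
lemmas has_vector_derivative_D0_Y = has_vector_derivative_D_Y[of 0, folded One_nat_def]
lemmas has_vector_derivative_D1_Y = has_vector_derivative_D_Y[of 1, unfolded Suc_1]

lemma chord_len_deriv: "(chord_len has_real_derivative cos \<alpha> * (vy \<tau> - vx \<tau>)) (at \<tau>)"
proof -
  let ?A = "\<lambda>\<tau>. D 0 (X \<tau>) \<bullet> D 0 (Y \<tau>)"
  have dA: "(?A has_real_derivative - cos \<alpha> * (vy \<tau> - vx \<tau>) * sin (chord_len \<tau>)) (at \<tau>)"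
    using has_real_derivative_inner[OF has_vector_derivative_D0_X has_vector_derivative_D0_Y]
    by (simp add: tangent_X_inner tangent_Y_inner algebra_simps)
  have "\<bar>?A \<tau>\<bar> < 1"
    using sin_chord_len_pos[of \<tau>] unfolding cos_chord_len[symmetric]
    by (simp add: abs_square_less_1[symmetric] cos_squared_eq)
  moreover have "sqrt (1 - (?A \<tau>)\<^sup>2) = sin (chord_len \<tau>)"
    using sin_chord_len_pos[of \<tau>] unfolding cos_chord_len[symmetric] by (simp add: cos_squared_eq)
  ultimately have "(chord_len has_real_derivative
      inverse (- sin (chord_len \<tau>)) * (- cos \<alpha> * (vy \<tau> - vx \<tau>) * sin (chord_len \<tau>))) (at \<tau>)"
    using DERIV_chain2[OF DERIV_arccos[of "?A \<tau>"] dA]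
    unfolding chord_len_def[abs_def] sph_dist_def by (simp add: abs_less_iff)
  also have "inverse (- sin (chord_len \<tau>)) * (- cos \<alpha> * (vy \<tau> - vx \<tau>) * sin (chord_len \<tau>))
      = cos \<alpha> * (vy \<tau> - vx \<tau>)"
    using sin_chord_len_pos[of \<tau>] by (simp add: field_simps)
  finally show ?thesis .
qed

lemma sin_chord_len_deriv:
  "((\<lambda>\<tau>. sin (chord_len \<tau>)) has_real_derivative cos (chord_len \<tau>) * (cos \<alpha> * (vy \<tau> - vx \<tau>))) (at \<tau>)"
  by (rule DERIV_chain2[OF DERIV_sin chord_len_deriv])

lemma D2_X_inner: "D 2 (X \<tau>) \<bullet> D 0 (Y \<tau>) = curv (X \<tau>) * hX \<tau> - cos (chord_len \<tau>)"
  unfolding D2_eq hX_def cos_chord_len by (simp add: inner_diff_left)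

lemma D2_Y_inner: "D 0 (X \<tau>) \<bullet> D 2 (Y \<tau>) = curv (Y \<tau>) * hY \<tau> - cos (chord_len \<tau>)"
  unfolding D2_eq hY_def cos_chord_len by (simp add: inner_diff_right inner_commute)

lemma tangent_X_identity:
  "vx \<tau> * (curv (X \<tau>) * hX \<tau> - cos (chord_len \<tau>)) + vy \<tau> * (D 1 (X \<tau>) \<bullet> D 1 (Y \<tau>))
    = (cos \<alpha>)\<^sup>2 * cos (chord_len \<tau>) * (vy \<tau> - vx \<tau>)"
proof -
  have L: "((\<lambda>\<tau>. D 1 (X \<tau>) \<bullet> D 0 (Y \<tau>)) has_real_derivative
      vx \<tau> * (D 2 (X \<tau>) \<bullet> D 0 (Y \<tau>)) + vy \<tau> * (D 1 (X \<tau>) \<bullet> D 1 (Y \<tau>))) (at \<tau>)"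
    using has_real_derivative_inner[OF has_vector_derivative_D1_X has_vector_derivative_D0_Y] by simp
  have R: "((\<lambda>\<tau>. cos \<alpha> * sin (chord_len \<tau>)) has_real_derivative
      cos \<alpha> * (cos (chord_len \<tau>) * (cos \<alpha> * (vy \<tau> - vx \<tau>)))) (at \<tau>)"
    by (intro DERIV_cmult sin_chord_len_deriv)
  from DERIV_unique_ext[OF tangent_X_inner L R] show ?thesis
    unfolding D2_X_inner
    by (simp add: power2_eq_square algebra_simps)
qed

lemma tangent_Y_identity:
  "vx \<tau> * (D 1 (X \<tau>) \<bullet> D 1 (Y \<tau>)) + vy \<tau> * (curv (Y \<tau>) * hY \<tau> - cos (chord_len \<tau>))
    = - (cos \<alpha>)\<^sup>2 * cos (chord_len \<tau>) * (vy \<tau> - vx \<tau>)"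
proof -
  have L: "((\<lambda>\<tau>. D 0 (X \<tau>) \<bullet> D 1 (Y \<tau>)) has_real_derivative
      vx \<tau> * (D 1 (X \<tau>) \<bullet> D 1 (Y \<tau>)) + vy \<tau> * (D 0 (X \<tau>) \<bullet> D 2 (Y \<tau>))) (at \<tau>)"
    using has_real_derivative_inner[OF has_vector_derivative_D0_X has_vector_derivative_D1_Y] by simp
  have R: "((\<lambda>\<tau>. - cos \<alpha> * sin (chord_len \<tau>)) has_real_derivative
      - cos \<alpha> * (cos (chord_len \<tau>) * (cos \<alpha> * (vy \<tau> - vx \<tau>)))) (at \<tau>)"
    by (intro DERIV_cmult sin_chord_len_deriv)
  from DERIV_unique_ext[OF tangent_Y_inner L R] show ?thesis
    unfolding D2_Y_inner
    by (simp add: power2_eq_square algebra_simps)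
qed

lemma normal_X_identity:
  "hX \<tau> * (vy \<tau> * (normal (X \<tau>) \<bullet> D 1 (Y \<tau>)) - vx \<tau> * curv (X \<tau>) * cos \<alpha> * sin (chord_len \<tau>))
    = (sin \<alpha>)\<^sup>2 * sin (chord_len \<tau>) * cos (chord_len \<tau>) * cos \<alpha> * (vy \<tau> - vx \<tau>)"
proof -
  have "(hX has_real_derivative
      vy \<tau> * (normal (X \<tau>) \<bullet> D 1 (Y \<tau>)) - vx \<tau> * curv (X \<tau>) * cos \<alpha> * sin (chord_len \<tau>)) (at \<tau>)"
    using has_real_derivative_inner[OF has_vector_derivative_compose_real[OF has_real_derivative_X
        has_vector_derivative_normal] has_vector_derivative_D0_Y]
    unfolding hX_def[abs_def] by (simp add: tangent_X_inner algebra_simps)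
  then have L: "((\<lambda>\<tau>. (hX \<tau>)\<^sup>2) has_real_derivative
      2 * hX \<tau> * (vy \<tau> * (normal (X \<tau>) \<bullet> D 1 (Y \<tau>)) - vx \<tau> * curv (X \<tau>) * cos \<alpha> * sin (chord_len \<tau>)))
      (at \<tau>)"
    by (auto intro!: derivative_eq_intros)
  have R: "((\<lambda>\<tau>. (sin \<alpha> * sin (chord_len \<tau>))\<^sup>2) has_real_derivative
      2 * (sin \<alpha>)\<^sup>2 * sin (chord_len \<tau>) * (cos (chord_len \<tau>) * (cos \<alpha> * (vy \<tau> - vx \<tau>)))) (at \<tau>)"
    by (auto intro!: derivative_eq_intros chord_len_deriv simp: power2_eq_square)
  from DERIV_unique_ext[OF hX_sq L R] show ?thesis by (simp add: algebra_simps)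
qed

lemma hX_hY_identity:
  "vy \<tau> * hY \<tau> * hX \<tau>
    = (sin (chord_len \<tau>))\<^sup>2 * vx \<tau> * (curv (X \<tau>) * hX \<tau> - (sin \<alpha>)\<^sup>2 * cos (chord_len \<tau>))"
  using tangent_X_identity[of \<tau>] normal_X_identity[of \<tau>] hY_eq[of \<tau>] hX_sq[of \<tau>]
    sin_cos_squared_add[of \<alpha>] by algebra

lemma curv_hY_identity:
  "(vy \<tau>)\<^sup>2 * curv (Y \<tau>) * hY \<tau>
    = (sin \<alpha>)\<^sup>2 * cos (chord_len \<tau>) * ((vy \<tau>)\<^sup>2 - (vx \<tau>)\<^sup>2) + (vx \<tau>)\<^sup>2 * curv (X \<tau>) * hX \<tau>"
  using tangent_X_identity[of \<tau>] tangent_Y_identity[of \<tau>] sin_cos_squared_add[of \<alpha>] by algebra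

end

section \<open>Gutkin curves\<close>

(* Here s = sin alpha, (A, B) = (cos l, sin l) for the chord length l, (s1, c1) and (s2, c2) are
   sine and cosine of f at the two ends, h and h' the normal components hX and hY; E1 and E2 are
   the differentiated contact conditions after eliminating the products of tangents and normals. *)
lemma chord_relation_algebra:
  fixes s A B s1 c1 s2 c2 h h' :: real
  assumes "s > 0" "B > 0" "s2 \<noteq> 0" "A\<^sup>2 + B\<^sup>2 = 1" "s1\<^sup>2 + c1\<^sup>2 = 1"
    and h_sq: "h\<^sup>2 = (s * B)\<^sup>2" and h'_sq: "h'\<^sup>2 = (s * B)\<^sup>2"
    and E1: "s2 * h' * h = s * B\<^sup>2 * (c1 * h - s * s1 * A)"
    and E2: "s2 * c2 * h' = s * A * (s2\<^sup>2 - s1\<^sup>2) + s1 * c1 * h"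
  shows "sgn h' * s2 = c1 * B - sgn h * s1 * A" and "c2 = c1 * A + sgn h * s1 * B"
proof -
  have sB: "s * B > 0" using assms(1,2) by simp
  have sgn_form: "z = sgn z * (s * B) \<and> (sgn z)\<^sup>2 = 1" if "z\<^sup>2 = (s * B)\<^sup>2" for z
  proof -
    from that have "z = s * B \<or> z = - (s * B)" by (simp add: power2_eq_iff)
    then show ?thesis using sB by auto
  qed
  obtain \<sigma> \<sigma>' where h: "h = \<sigma> * (s * B)" "\<sigma>\<^sup>2 = 1" and h': "h' = \<sigma>' * (s * B)" "\<sigma>'\<^sup>2 = 1"
    and "\<sigma> = sgn h" "\<sigma>' = sgn h'"
    using sgn_form[OF h_sq] sgn_form[OF h'_sq] by blast
  have "(s * B)\<^sup>2 * (\<sigma>' * s2 - (c1 * B - \<sigma> * s1 * A)) = 0"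
    using E1 h h' by algebra
  then have R1: "\<sigma>' * s2 = c1 * B - \<sigma> * s1 * A" using assms(1,2) by auto
  have "s * (\<sigma>' * s2 * B * (c2 - (c1 * A + \<sigma> * s1 * B))) = 0"
    using E2 R1 h h' assms(4,5) by algebra
  then have "c2 = c1 * A + \<sigma> * s1 * B" using assms(1,2,3) h'(2) by auto
  with R1 show "sgn h' * s2 = c1 * B - sgn h * s1 * A" "c2 = c1 * A + sgn h * s1 * B"
    using \<open>\<sigma> = sgn h\<close> \<open>\<sigma>' = sgn h'\<close> by simp_all
qed

locale gutkin_family = chord_family +
  fixes P a :: real and f :: "real \<Rightarrow> real"
  assumes periodic: "\<And>s. D 0 (s + P) = D 0 s" and period_pos: "P > 0"
    and curv_nonneg: "\<And>s. curv s \<ge> 0"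
    and alpha_pos: "0 < \<alpha>" and alpha_less_pi: "\<alpha> < pi"
    and a_pos: "a > 0"
    and vx_eq: "\<And>\<tau>. vx \<tau> = a / sqrt ((curv (X \<tau>))\<^sup>2 + (sin \<alpha>)\<^sup>2)"
    and vy_eq: "\<And>\<tau>. vy \<tau> = a / sqrt ((curv (Y \<tau>))\<^sup>2 + (sin \<alpha>)\<^sup>2)"
    and f_range: "\<And>s. 0 < f s \<and> f s < pi"
    and f_cot: "\<And>s. cot (f s) = curv s / sin \<alpha>"
begin

lemma sin_alpha_pos: "sin \<alpha> > 0"
  using alpha_pos alpha_less_pi by (rule sin_gt_zero)

lemma sin_f_pos: "sin (f s) > 0"
  using f_range by (simp add: sin_gt_zero)

lemma sin_f: "sin (f s) = sin \<alpha> / sqrt ((curv s)\<^sup>2 + (sin \<alpha>)\<^sup>2)"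
  and cos_f: "cos (f s) = curv s / sqrt ((curv s)\<^sup>2 + (sin \<alpha>)\<^sup>2)"
  using sin_cos_eq_of_cot[OF _ _ sin_alpha_pos f_cot] f_range by auto

lemma cos_f_nonneg: "cos (f s) \<ge> 0"
  unfolding cos_f using curv_nonneg by simp

lemma speed_X: "vx \<tau> * sin \<alpha> = a * sin (f (X \<tau>))" "vx \<tau> * curv (X \<tau>) = a * cos (f (X \<tau>))"
  and speed_Y: "vy \<tau> * sin \<alpha> = a * sin (f (Y \<tau>))" "vy \<tau> * curv (Y \<tau>) = a * cos (f (Y \<tau>))"
  unfolding vx_eq vy_eq sin_f cos_f by simp_all

lemma f_eq_arctan: "f s = pi / 2 - arctan (curv s / sin \<alpha>)"
  using eq_pi_half_minus_arctan_cot[of "f s"] f_range f_cot by simp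

lemma cos_f_mono: "curv s \<le> curv s' \<Longrightarrow> cos (f s) \<le> cos (f s')"
  using f_range[of s] f_range[of s'] sin_alpha_pos
  by (subst cos_mono_le_eq) (auto simp: f_eq_arctan arctan_le_iff divide_right_mono)

lemma f_has_real_derivative: "\<exists>d. (f has_real_derivative d) (at s)"
proof -
  have "((\<lambda>s. pi / 2 - arctan (curv s / sin \<alpha>)) has_real_derivative
      - (inverse (1 + (curv s / sin \<alpha>)\<^sup>2) * (normal s \<bullet> D 3 s / sin \<alpha>))) (at s)"
    using sin_alpha_pos by (auto intro!: derivative_eq_intros has_real_derivative_curv)
  then show ?thesis unfolding f_eq_arctan[abs_def] by blast
qed

lemma f_Y_relation:
  "sgn (hY \<tau>) * sin (f (Y \<tau>))
    = cos (f (X \<tau>)) * sin (chord_len \<tau>) - sgn (hX \<tau>) * sin (f (X \<tau>)) * cos (chord_len \<tau>)"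
  "cos (f (Y \<tau>)) = cos (f (X \<tau>)) * cos (chord_len \<tau>) + sgn (hX \<tau>) * sin (f (X \<tau>)) * sin (chord_len \<tau>)"
proof -
  let ?s = "sin \<alpha>" and ?A = "cos (chord_len \<tau>)" and ?B = "sin (chord_len \<tau>)"
  let ?s1 = "sin (f (X \<tau>))" and ?c1 = "cos (f (X \<tau>))"
  let ?s2 = "sin (f (Y \<tau>))" and ?c2 = "cos (f (Y \<tau>))"
  have "a * (?s2 * hY \<tau> * hX \<tau>) = a * (?s * ?B\<^sup>2 * (?c1 * hX \<tau> - ?s * ?s1 * ?A))"
    using hX_hY_identity[of \<tau>] speed_X[of \<tau>] speed_Y[of \<tau>] by algebra
  then have E1: "?s2 * hY \<tau> * hX \<tau> = ?s * ?B\<^sup>2 * (?c1 * hX \<tau> - ?s * ?s1 * ?A)"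
    using a_pos by simp
  have "a\<^sup>2 * ?s * (?s2 * ?c2 * hY \<tau>) = a\<^sup>2 * ?s * (?s * ?A * (?s2\<^sup>2 - ?s1\<^sup>2) + ?s1 * ?c1 * hX \<tau>)"
    using curv_hY_identity[of \<tau>] speed_X[of \<tau>] speed_Y[of \<tau>] by algebra
  then have E2: "?s2 * ?c2 * hY \<tau> = ?s * ?A * (?s2\<^sup>2 - ?s1\<^sup>2) + ?s1 * ?c1 * hX \<tau>"
    using a_pos sin_alpha_pos by simp
  show "sgn (hY \<tau>) * ?s2 = ?c1 * ?B - sgn (hX \<tau>) * ?s1 * ?A" "?c2 = ?c1 * ?A + sgn (hX \<tau>) * ?s1 * ?B"
    using chord_relation_algebra[OF sin_alpha_pos sin_chord_len_pos _ _ _ _ _ E1 E2]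
      sin_f_pos[of "Y \<tau>"] hX_sq[of \<tau>] hY_sq[of \<tau>] by (simp_all add: power_mult_distrib)
qed

lemma f_X_relation:
  "cos (f (X \<tau>)) = cos (f (Y \<tau>)) * cos (chord_len \<tau>) + sgn (hY \<tau>) * sin (f (Y \<tau>)) * sin (chord_len \<tau>)"
  using f_Y_relation[of \<tau>] sin_cos_squared_add[of "chord_len \<tau>"] by algebra

lemma hX_nonzero: "hX \<tau> \<noteq> 0" and hY_nonzero: "hY \<tau> \<noteq> 0"
  using hX_sq[of \<tau>] hY_sq[of \<tau>] sin_alpha_pos sin_chord_len_pos[of \<tau>] by auto

lemma continuous_hX: "continuous_on UNIV hX" and continuous_hY: "continuous_on UNIV hY"
proof -
  have "isCont X \<tau>" "isCont Y \<tau>" for \<tau>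
    using has_real_derivative_X has_real_derivative_Y by (blast intro: DERIV_isCont)+
  then have "isCont hX \<tau>" "isCont hY \<tau>" for \<tau>
    unfolding hX_def[abs_def] hY_def[abs_def]
    by (auto intro!: continuous_intros isCont_o2[OF _ isCont_normal] isCont_o2[OF _ isCont_D])
  then show "continuous_on UNIV hX" "continuous_on UNIV hY"
    by (auto intro: continuous_at_imp_continuous_on)
qed

lemma curv_attains_min: "\<exists>s0. \<forall>s. curv s0 \<le> curv s"
  and curv_attains_max: "\<exists>s1. \<forall>s. curv s \<le> curv s1"
  using continuous_periodic_attains_inf_sup[OF continuous_curv periodic_curv[OF periodic] period_pos]
  by blast+

lemma surj_X: "surj X" and surj_Y: "surj Y"
proof -
  obtain s1 where s1: "\<And>s. curv s \<le> curv s1" using curv_attains_max by blast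
  define m where "m = a / sqrt ((curv s1)\<^sup>2 + (sin \<alpha>)\<^sup>2)"
  have "m > 0" unfolding m_def using a_pos sin_alpha_pos by (simp add: add_nonneg_pos)
  have "a / sqrt ((curv s)\<^sup>2 + (sin \<alpha>)\<^sup>2) \<ge> m" for s
  proof -
    have "(curv s)\<^sup>2 \<le> (curv s1)\<^sup>2" using s1[of s] curv_nonneg[of s] by (simp add: power_mono)
    then show ?thesis
      unfolding m_def using a_pos sin_alpha_pos by (intro divide_left_mono) (auto simp: add_nonneg_pos)
  qed
  then have "vx \<tau> \<ge> m" "vy \<tau> \<ge> m" for \<tau> unfolding vx_eq vy_eq by blast+
  with \<open>m > 0\<close> show "surj X" "surj Y"
    using surj_if_deriv_bounded_below has_real_derivative_X has_real_derivative_Y by blast+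
qed

lemma chord_side_pos:
  assumes "continuous_on UNIV h" "\<And>\<tau>. h \<tau> \<noteq> 0" "surj V"
    and relation: "\<And>\<tau>. cos (f (W \<tau>))
      = cos (f (V \<tau>)) * cos (chord_len \<tau>) + sgn (h \<tau>) * sin (f (V \<tau>)) * sin (chord_len \<tau>)"
  shows "h \<tau> > 0"
proof -
  obtain s0 where s0: "\<And>s. curv s0 \<le> curv s" using curv_attains_min by blast
  from \<open>surj V\<close> obtain \<tau>0 where "s0 = V \<tau>0" by (rule surjE)
  then have le: "cos (f (V \<tau>0)) \<le> cos (f (W \<tau>0))" using s0 cos_f_mono by blast
  have "h \<tau>0 > 0"
  proof (rule ccontr)
    assume "\<not> h \<tau>0 > 0"
    then have "sgn (h \<tau>0) = -1" using assms(2)[of \<tau>0] by (simp add: sgn_if)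
    then have "cos (f (W \<tau>0)) = cos (f (V \<tau>0)) * cos (chord_len \<tau>0) - sin (f (V \<tau>0)) * sin (chord_len \<tau>0)"
      using relation[of \<tau>0] by simp
    moreover have "cos (f (V \<tau>0)) * cos (chord_len \<tau>0) \<le> cos (f (V \<tau>0))"
      using cos_f_nonneg by (simp add: mult_left_le)
    moreover have "sin (f (V \<tau>0)) * sin (chord_len \<tau>0) > 0"
      using sin_f_pos sin_chord_len_pos by simp
    ultimately show False using le by linarith
  qed
  with assms(1,2) show ?thesis by (rule continuous_nonvanishing_pos)
qed

lemma hX_pos: "hX \<tau> > 0"
  using chord_side_pos[OF continuous_hX hX_nonzero surj_X f_Y_relation(2)] .

lemma hY_pos: "hY \<tau> > 0"
  using chord_side_pos[OF continuous_hY hY_nonzero surj_Y f_X_relation] .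

lemma f_sum: "f (X \<tau>) + f (Y \<tau>) = chord_len \<tau>"
proof -
  have "sgn (hX \<tau>) = 1" "sgn (hY \<tau>) = 1" using hX_pos hY_pos by simp_all
  then have sin_eq: "sin (f (Y \<tau>)) = sin (chord_len \<tau> - f (X \<tau>))"
    and cos_eq: "cos (f (Y \<tau>)) = cos (chord_len \<tau> - f (X \<tau>))"
    using f_Y_relation[of \<tau>] unfolding sin_diff cos_diff by (simp_all add: mult.commute)
  have "0 < chord_len \<tau> - f (X \<tau>)"
  proof (rule ccontr)
    assume "\<not> 0 < chord_len \<tau> - f (X \<tau>)"
    then have "0 \<le> sin (f (X \<tau>) - chord_len \<tau>)"
      using chord_len_bounds[of \<tau>] f_range[of "X \<tau>"] by (intro sin_ge_zero) auto
    moreover have "sin (chord_len \<tau> - f (X \<tau>)) = - sin (f (X \<tau>) - chord_len \<tau>)"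
      using sin_minus[of "f (X \<tau>) - chord_len \<tau>"] by simp
    ultimately show False using sin_eq sin_f_pos[of "Y \<tau>"] by simp
  qed
  moreover have "chord_len \<tau> - f (X \<tau>) \<le> pi" "0 \<le> f (Y \<tau>)" "f (Y \<tau>) \<le> pi"
    using chord_len_bounds[of \<tau>] f_range[of "X \<tau>"] f_range[of "Y \<tau>"] by linarith+
  ultimately have "f (Y \<tau>) = chord_len \<tau> - f (X \<tau>)"
    using cos_inj_pi[OF _ _ _ _ cos_eq] by simp
  then show ?thesis by simp
qed

lemma f_X_plus_f_Y_deriv:
  "\<exists>d1 d2. ((\<lambda>\<tau>. f (X \<tau>)) has_real_derivative d1) (at t)
      \<and> ((\<lambda>\<tau>. f (Y \<tau>)) has_real_derivative d2) (at t)
      \<and> d1 + d2 = a * cot \<alpha> * (sin (f (Y t)) - sin (f (X t)))"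
proof -
  obtain e1 e2 where "(f has_real_derivative e1) (at (X t))" "(f has_real_derivative e2) (at (Y t))"
    using f_has_real_derivative by blast
  then have dX: "((\<lambda>\<tau>. f (X \<tau>)) has_real_derivative e1 * vx t) (at t)"
    and dY: "((\<lambda>\<tau>. f (Y \<tau>)) has_real_derivative e2 * vy t) (at t)"
    using DERIV_chain2 has_real_derivative_X has_real_derivative_Y by blast+
  have "e1 * vx t + e2 * vy t = cos \<alpha> * (vy t - vx t)"
    using DERIV_unique_ext[OF f_sum DERIV_add[OF dX dY] chord_len_deriv] .
  also have "\<dots> = a * cot \<alpha> * (sin (f (Y t)) - sin (f (X t)))"
    using speed_X(1)[of t] speed_Y(1)[of t] sin_alpha_pos unfolding cot_def
    by (simp add: field_simps)
  finally show ?thesis using dX dY by blast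
qed

end

theorem mainTheorem5:
  fixes \<gamma> :: "real \<Rightarrow> real^3" and L \<alpha> a :: real
    and X Y :: "real \<Rightarrow> real" and f :: "real \<Rightarrow> real" and t :: real
  assumes curve: "convex_sphere_curve \<gamma> L"
    and alpha: "0 < \<alpha>" "\<alpha> < pi"
    and a_pos: "a > 0"
    and gutkin: "\<And>\<tau>. chord_angle \<gamma> \<alpha> (X \<tau>) (Y \<tau>)"
    and X_deriv: "\<And>\<tau>. (X has_real_derivative
          a / sqrt ((geod_curv \<gamma> (X \<tau>))\<^sup>2 + (sin \<alpha>)\<^sup>2)) (at \<tau>)"
    and Y_deriv: "\<And>\<tau>. (Y has_real_derivative
          a / sqrt ((geod_curv \<gamma> (Y \<tau>))\<^sup>2 + (sin \<alpha>)\<^sup>2)) (at \<tau>)"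
    and f_range: "\<And>s. 0 < f s \<and> f s < pi"
    and f_cot: "\<And>s. cot (f s) = geod_curv \<gamma> s / sin \<alpha>"
  shows "\<exists>d1 d2. ((\<lambda>\<tau>. f (X \<tau>)) has_real_derivative d1) (at t)
              \<and> ((\<lambda>\<tau>. f (Y \<tau>)) has_real_derivative d2) (at t)
              \<and> d1 + d2 = a * cot \<alpha> * (sin (f (Y t)) - sin (f (X t)))"
proof -
  obtain D where D0: "D 0 = \<gamma>" and D: "\<And>k s. (D k has_vector_derivative D (Suc k) s) (at s)"
    using curve unfolding convex_sphere_curve_def smooth_curve_def by blast
  have "tangent \<gamma> = D 1"
    using D[of 0] unfolding tangent_def D0[symmetric]
    by (simp add: vector_derivative_at fun_eq_iff One_nat_def)
  then interpret unit_sphere_curve D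
    using curve D unfolding convex_sphere_curve_def D0[symmetric] by unfold_locales auto
  interpret gutkin_family D \<alpha> X Y
      "\<lambda>\<tau>. a / sqrt ((curv (X \<tau>))\<^sup>2 + (sin \<alpha>)\<^sup>2)"
      "\<lambda>\<tau>. a / sqrt ((curv (Y \<tau>))\<^sup>2 + (sin \<alpha>)\<^sup>2)" L a f
    using curve alpha a_pos gutkin X_deriv Y_deriv f_range f_cot
    unfolding convex_sphere_curve_def D0[symmetric] by unfold_locales auto
  show ?thesis by (rule f_X_plus_f_Y_deriv)
qed

end
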